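(* Let $P_n$ be a labeled path whose ribbon diagram $RT(P_n)$ has at least two columns and every column of $RT(P_n)$ contains at least $2$ boxes (equivalently, the ribbon diagram of the path $f(P_n)$ with labeling $(n+1-\sigma_1)\cdots(n+1-\sigma_n)$ has composition $(\alpha_1,\dots,\alpha_k)$ with $k\ge2$ and all $\alpha_i\ge 2$). Then $X(P_n;\mathbf{x},q)$ is not symmetric.
   Context: A labeled path $P_n$ is the path graph with vertices $v_1,\dots,v_n$ (edges $v_iv_{i+1}$) where $v_i$ carries label $\sigma_i$ for a permutation $\sigma$ of $[n]$; vertices are identified with labels. A proper coloring is $c\colon[n]\to\{1,2,\dots\}$ with adjacent vertices colored differently; $\operatorname{asc}(c)=\#\{ij\in E: i<j,\ c(i)<c(j)\}$. The CQF is $X(P_n;\mathbf{x},q)=\sum_{c \text{ proper}} x_{c(1)}\cdots x_{c(n)}q^{\operatorname{asc}(c)}$; it is symmetric if each coefficient of $q^k$ is a symmetric function. The ad-pattern of $P_n$ is $w_1\cdots w_{n-1}$ with $w_i=a$ if $\sigma_i<\sigma_{i+1}$ and $w_i=d$ otherwise. The ribbon diagram $RT(P_n)$: start with box $1$, and for $i=1,\dots,n-1$ place box $i+1$ immediately right of box $i$ if $w_i=a$ and immediately above box $i$ if $w_i=d$. Its composition lists the number of boxes in each row from the bottom row up; a column is the set of boxes sharing the same horizontal position. *)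

theory Defs
  imports Main
begin

(* A labeled path P_n is given by a permutation sigma of {1..n}:
   vertex v_i carries label sigma i, vertices are identified with labels,
   edges are {sigma i, sigma (i+1)} for 1 <= i < n. *)
definition labeled_path :: "nat \<Rightarrow> (nat \<Rightarrow> nat) \<Rightarrow> bool" where
  "labeled_path n \<sigma> \<longleftrightarrow> bij_betw \<sigma> {1..n} {1..n}"

definition proper_coloring :: "nat \<Rightarrow> (nat \<Rightarrow> nat) \<Rightarrow> (nat \<Rightarrow> nat) \<Rightarrow> bool" where
  "proper_coloring n \<sigma> c \<longleftrightarrow>
     (\<forall>i\<in>{1..n}. c i \<ge> 1) \<and> (\<forall>i. i \<notin> {1..n} \<longrightarrow> c i = 0) \<and>
     (\<forall>i. 1 \<le> i \<and> i < n \<longrightarrow> c (\<sigma> i) \<noteq> c (\<sigma> (Suc i)))"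

definition asc :: "nat \<Rightarrow> (nat \<Rightarrow> nat) \<Rightarrow> (nat \<Rightarrow> nat) \<Rightarrow> nat" where
  "asc n \<sigma> c = card {i. 1 \<le> i \<and> i < n \<and>
      ((\<sigma> i < \<sigma> (Suc i) \<and> c (\<sigma> i) < c (\<sigma> (Suc i))) \<or>
       (\<sigma> (Suc i) < \<sigma> i \<and> c (\<sigma> (Suc i)) < c (\<sigma> i)))}"

(* Coefficient of q^k x_1^{a 1} x_2^{a 2} ... in X(P_n; x, q):
   number of proper colorings with asc = k whose color multiplicities are a
   (a 0 is irrelevant since colors are positive). *)
definition cqf_coeff :: "nat \<Rightarrow> (nat \<Rightarrow> nat) \<Rightarrow> nat \<Rightarrow> (nat \<Rightarrow> nat) \<Rightarrow> nat" where
  "cqf_coeff n \<sigma> k a = card {c. proper_coloring n \<sigma> c \<and> asc n \<sigma> c = k \<and>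
      (\<forall>j\<ge>1. card {i\<in>{1..n}. c i = j} = a j)}"

definition cqf_symmetric :: "nat \<Rightarrow> (nat \<Rightarrow> nat) \<Rightarrow> bool" where
  "cqf_symmetric n \<sigma> \<longleftrightarrow>
     (\<forall>k a \<pi>. bij_betw \<pi> {1..} {1..} \<longrightarrow>
        cqf_coeff n \<sigma> k (\<lambda>j. a (\<pi> j)) = cqf_coeff n \<sigma> k a)"

(* ribbon diagram: box i (1 <= i <= n) sits at (column, row) where the column
   is the number of ascents w_j = a with j < i and the row the number of descents. *)
definition ribbon_pos :: "(nat \<Rightarrow> nat) \<Rightarrow> nat \<Rightarrow> nat \<times> nat" where
  "ribbon_pos \<sigma> i =
     (card {j. 1 \<le> j \<and> j < i \<and> \<sigma> j < \<sigma> (Suc j)},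
      card {j. 1 \<le> j \<and> j < i \<and> \<not> \<sigma> j < \<sigma> (Suc j)})"

definition ribbon_columns :: "nat \<Rightarrow> (nat \<Rightarrow> nat) \<Rightarrow> nat set" where
  "ribbon_columns n \<sigma> = (\<lambda>i. fst (ribbon_pos \<sigma> i)) ` {1..n}"

definition column_boxes :: "nat \<Rightarrow> (nat \<Rightarrow> nat) \<Rightarrow> nat \<Rightarrow> nat set" where
  "column_boxes n \<sigma> x = {i\<in>{1..n}. fst (ribbon_pos \<sigma> i) = x}"

end

theory Submission
  imports Defs
begin

text \<open>A coloring of \<open>P\<^sub>n\<close> is read as a coloring \<open>d\<close> of the positions \<open>1..n\<close> of the path.
  Call step \<open>i\<close> of a sequence zigzag if it rises for odd \<open>i\<close> and falls for even \<open>i\<close>; an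
  edge is an ascent of \<open>d\<close> exactly when \<open>d\<close> and \<open>\<sigma>\<close> agree on being zigzag there.  Take
  \<open>k\<close> the number of zigzag steps of \<open>\<sigma>\<close>: then \<open>asc d = k\<close> iff exactly half of the
  non-zigzag steps of \<open>d\<close> are zigzag steps of \<open>\<sigma>\<close>.

  Compare the coefficients of \<open>q\<^sup>k\<close> for the contents \<open>(\<lceil>n/2\<rceil>, \<lfloor>n/2\<rfloor> - 1, 1)\<close> and
  its cyclic rotation \<open>(1, \<lceil>n/2\<rceil>, \<lfloor>n/2\<rfloor> - 1)\<close>.  In both, one color occupies a maximum
  set of pairwise non-adjacent positions, which is the set of odd positions shifted to even
  ones past a single gap; so all colorings involved are explicit.  The first coefficient is
  at least \<open>\<lfloor>n/2\<rfloor> + T\<close>, the second at most \<open>E + T\<close> (plus one if \<open>n\<close> is even), where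
  \<open>E\<close> counts the even interior positions at which \<open>\<sigma>\<close> has neither a peak nor a valley and
  \<open>T\<close> counts balanced tails of \<open>\<sigma>\<close>.  The ribbon hypotheses produce a peak or a valley at an
  even interior position, so the second coefficient is strictly smaller.\<close>

definition proper_positions :: "nat \<Rightarrow> (nat \<Rightarrow> nat) \<Rightarrow> bool" where
  "proper_positions n d \<longleftrightarrow> (\<forall>i\<in>{1..n}. d i \<ge> 1) \<and> (\<forall>i. i \<notin> {1..n} \<longrightarrow> d i = 0) \<and>
     (\<forall>i. 1 \<le> i \<and> i < n \<longrightarrow> d i \<noteq> d (Suc i))"

definition position_asc :: "nat \<Rightarrow> (nat \<Rightarrow> nat) \<Rightarrow> (nat \<Rightarrow> nat) \<Rightarrow> nat" where
  "position_asc n \<sigma> d = card {i. 1 \<le> i \<and> i < n \<and>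
      ((\<sigma> i < \<sigma> (Suc i) \<and> d i < d (Suc i)) \<or> (\<sigma> (Suc i) < \<sigma> i \<and> d (Suc i) < d i))}"

definition color_count :: "nat \<Rightarrow> (nat \<Rightarrow> nat) \<Rightarrow> nat \<Rightarrow> nat" where
  "color_count n d j = card {i\<in>{1..n}. d i = j}"

definition position_colorings :: "nat \<Rightarrow> (nat \<Rightarrow> nat) \<Rightarrow> nat \<Rightarrow> (nat \<Rightarrow> nat) \<Rightarrow> (nat \<Rightarrow> nat) set" where
  "position_colorings n \<sigma> k a =
     {d. proper_positions n d \<and> position_asc n \<sigma> d = k \<and> (\<forall>j\<ge>1. color_count n d j = a j)}"

definition along_path :: "nat \<Rightarrow> (nat \<Rightarrow> nat) \<Rightarrow> (nat \<Rightarrow> nat) \<Rightarrow> nat \<Rightarrow> nat" where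
  "along_path n \<sigma> c i = (if i \<in> {1..n} then c (\<sigma> i) else 0)"

lemma along_path_along_path:
  assumes "\<And>i. i \<in> {1..n} \<Longrightarrow> \<sigma> i \<in> {1..n} \<and> \<tau> (\<sigma> i) = i" and "\<And>x. x \<notin> {1..n} \<Longrightarrow> c x = 0"
  shows "along_path n \<sigma> (along_path n \<tau> c) = c"
  using assms by (auto simp: along_path_def)

lemma card_color_class_permute:
  assumes "bij_betw \<sigma> {1..n} {1..n}"
  shows "card {x\<in>{1..n}. c x = j} = card {i\<in>{1..n}. c (\<sigma> i) = j}"
proof -
  have "\<sigma> ` {i\<in>{1..n}. c (\<sigma> i) = j} = {x\<in>\<sigma> ` {1..n}. c x = j}"
    by auto
  then have "{x\<in>{1..n}. c x = j} = \<sigma> ` {i\<in>{1..n}. c (\<sigma> i) = j}"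
    using bij_betw_imp_surj_on[OF assms] by simp
  moreover have "inj_on \<sigma> {i\<in>{1..n}. c (\<sigma> i) = j}"
    using assms by (auto simp: bij_betw_def intro: inj_on_subset)
  ultimately show ?thesis by (simp add: card_image)
qed

lemma along_path_mem_position_colorings_iff:
  assumes bij: "bij_betw \<sigma> {1..n} {1..n}" and outside: "\<And>x. x \<notin> {1..n} \<Longrightarrow> c x = 0"
  shows "along_path n \<sigma> c \<in> position_colorings n \<sigma> k a \<longleftrightarrow>
    proper_coloring n \<sigma> c \<and> asc n \<sigma> c = k \<and> (\<forall>j\<ge>1. card {x\<in>{1..n}. c x = j} = a j)"
proof -
  have \<sigma>_in: "\<sigma> i \<in> {1..n}" if "i \<in> {1..n}" for i
    using bij that by (auto simp: bij_betw_def)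
  have along: "along_path n \<sigma> c i = c (\<sigma> i)" if "i \<in> {1..n}" for i
    using that by (simp add: along_path_def)
  have "(\<forall>x\<in>{1..n}. 1 \<le> c x) \<longleftrightarrow> (\<forall>i\<in>{1..n}. 1 \<le> c (\<sigma> i))"
    by (subst bij_betw_imp_surj_on[OF bij, symmetric]) simp
  then have "proper_positions n (along_path n \<sigma> c) \<longleftrightarrow> proper_coloring n \<sigma> c"
    using outside \<sigma>_in unfolding proper_positions_def proper_coloring_def along_path_def by auto
  moreover have "position_asc n \<sigma> (along_path n \<sigma> c) = asc n \<sigma> c"
    unfolding position_asc_def asc_def by (rule arg_cong[where f = card]) (auto simp: along)
  moreover have "color_count n (along_path n \<sigma> c) j = card {x\<in>{1..n}. c x = j}" for j
    unfolding color_count_def card_color_class_permute[OF bij, of c]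
    by (rule arg_cong[where f = card]) (auto simp: along)
  ultimately show ?thesis by (simp add: position_colorings_def)
qed

lemma cqf_coeff_eq_card_position_colorings:
  assumes bij: "bij_betw \<sigma> {1..n} {1..n}"
  shows "cqf_coeff n \<sigma> k a = card (position_colorings n \<sigma> k a)"
proof -
  define \<tau> where "\<tau> = the_inv_into {1..n} \<sigma>"
  have \<tau>_bij: "bij_betw \<tau> {1..n} {1..n}" unfolding \<tau>_def by (rule bij_betw_the_inv_into[OF bij])
  have \<tau>_inv: "\<tau> x \<in> {1..n} \<and> \<sigma> (\<tau> x) = x" if "x \<in> {1..n}" for x
    using that bij_betwE[OF \<tau>_bij] f_the_inv_into_f_bij_betw[OF bij] unfolding \<tau>_def by auto
  have \<sigma>_inv: "\<sigma> i \<in> {1..n} \<and> \<tau> (\<sigma> i) = i" if "i \<in> {1..n}" for i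
    using that bij_betwE[OF bij] bij unfolding \<tau>_def by (auto simp: bij_betw_def the_inv_into_f_f)
  let ?C = "{c. proper_coloring n \<sigma> c \<and> asc n \<sigma> c = k \<and> (\<forall>j\<ge>1. card {i\<in>{1..n}. c i = j} = a j)}"
  have vanish: "\<And>x. x \<notin> {1..n} \<Longrightarrow> c x = 0" if "c \<in> ?C" for c
    using that by (simp add: proper_coloring_def)
  have vanish': "\<And>x. x \<notin> {1..n} \<Longrightarrow> d x = 0" if "d \<in> position_colorings n \<sigma> k a" for d
    using that by (simp add: position_colorings_def proper_positions_def)
  have "bij_betw (along_path n \<sigma>) ?C (position_colorings n \<sigma> k a)"
  proof (rule bij_betw_byWitness[where f' = "along_path n \<tau>"])
    show "\<forall>c\<in>?C. along_path n \<tau> (along_path n \<sigma> c) = c"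
      using along_path_along_path[of n \<tau> \<sigma>, OF \<tau>_inv] vanish by blast
    show "\<forall>d\<in>position_colorings n \<sigma> k a. along_path n \<sigma> (along_path n \<tau> d) = d"
      using along_path_along_path[of n \<sigma> \<tau>, OF \<sigma>_inv] vanish' by blast
    show "along_path n \<sigma> ` ?C \<subseteq> position_colorings n \<sigma> k a"
      using along_path_mem_position_colorings_iff[OF bij] vanish by blast
    show "along_path n \<tau> ` position_colorings n \<sigma> k a \<subseteq> ?C"
    proof
      fix c assume "c \<in> along_path n \<tau> ` position_colorings n \<sigma> k a"
      then obtain d where d: "d \<in> position_colorings n \<sigma> k a" and c: "c = along_path n \<tau> d" by blast
      have "along_path n \<sigma> c = d"
        unfolding c by (rule along_path_along_path[OF \<sigma>_inv vanish'[OF d]])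
      moreover have "x \<notin> {1..n} \<Longrightarrow> c x = 0" for x unfolding c along_path_def by auto
      ultimately show "c \<in> ?C" using along_path_mem_position_colorings_iff[OF bij, of c] d by simp
    qed
  qed
  then show ?thesis unfolding cqf_coeff_def by (rule bij_betw_same_card)
qed

definition zigzag :: "(nat \<Rightarrow> nat) \<Rightarrow> nat \<Rightarrow> bool" where
  "zigzag f i \<longleftrightarrow> (if odd i then f i < f (Suc i) else f (Suc i) < f i)"

abbreviation zigzag_count :: "nat \<Rightarrow> (nat \<Rightarrow> nat) \<Rightarrow> nat" where
  "zigzag_count n \<sigma> \<equiv> card {i\<in>{1..<n}. zigzag \<sigma> i}"

definition zigzag_breaks :: "nat \<Rightarrow> (nat \<Rightarrow> nat) \<Rightarrow> nat set" where
  "zigzag_breaks n f = {i\<in>{1..<n}. \<not> zigzag f i}"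

lemma zigzag_breaks_eqI:
  "(\<And>i. i \<in> {1..<n} \<Longrightarrow> \<not> zigzag d i \<longleftrightarrow> P i) \<Longrightarrow> zigzag_breaks n d = {i\<in>{1..<n}. P i}"
  unfolding zigzag_breaks_def by auto

lemma position_asc_balance:
  assumes inj: "inj_on \<sigma> {1..n}" and proper: "proper_positions n d"
  shows "position_asc n \<sigma> d + 2 * card {i\<in>zigzag_breaks n d. zigzag \<sigma> i}
       = zigzag_count n \<sigma> + card (zigzag_breaks n d)"
proof -
  have agree: "((\<sigma> i < \<sigma> (Suc i) \<and> d i < d (Suc i)) \<or> (\<sigma> (Suc i) < \<sigma> i \<and> d (Suc i) < d i))
      \<longleftrightarrow> (zigzag \<sigma> i \<longleftrightarrow> zigzag d i)" if "i \<in> {1..<n}" for i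
  proof -
    have "\<sigma> i \<noteq> \<sigma> (Suc i)" using inj that by (auto dest: inj_onD)
    moreover have "d i \<noteq> d (Suc i)" using proper that by (auto simp: proper_positions_def)
    ultimately show ?thesis unfolding zigzag_def by (cases "odd i") auto
  qed
  have count: "card {i\<in>{1..<n}. P i} = (\<Sum>i\<in>{1..<n}. if P i then 1 else 0)" for P
    by (simp add: sum.inter_filter[symmetric])
  have asc: "position_asc n \<sigma> d = card {i\<in>{1..<n}. zigzag \<sigma> i = zigzag d i}"
    unfolding position_asc_def by (rule arg_cong[where f = card]) (use agree in auto)
  have breaks: "{i\<in>zigzag_breaks n d. zigzag \<sigma> i} = {i\<in>{1..<n}. \<not> zigzag d i \<and> zigzag \<sigma> i}"
    by (auto simp: zigzag_breaks_def)
  show ?thesis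
    unfolding asc breaks unfolding zigzag_breaks_def count sum_distrib_left sum.distrib[symmetric]
    by (intro sum.cong) auto
qed

corollary position_asc_eq_iff:
  assumes "inj_on \<sigma> {1..n}" and "proper_positions n d"
  shows "position_asc n \<sigma> d = zigzag_count n \<sigma> \<longleftrightarrow>
         card (zigzag_breaks n d) = 2 * card {i\<in>zigzag_breaks n d. zigzag \<sigma> i}"
  using position_asc_balance[OF assms] by linarith

definition no_adjacent :: "nat set \<Rightarrow> bool" where
  "no_adjacent S \<longleftrightarrow> (\<forall>i\<in>S. Suc i \<notin> S)"

definition shifted_odds :: "nat \<Rightarrow> nat \<Rightarrow> nat set" where
  "shifted_odds n t = {i\<in>{1..n}. odd i \<and> i < 2*t \<or> even i \<and> 2*t + 1 < i}"

lemma no_adjacent_shifted_odds: "no_adjacent (shifted_odds n t)"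
  unfolding no_adjacent_def shifted_odds_def by auto

lemma shifted_odds_subset: "shifted_odds n t \<subseteq> {1..n}"
  unfolding shifted_odds_def by auto

lemma mem_shifted_odds:
  "i \<in> {1..n} \<Longrightarrow> i \<in> shifted_odds n t \<longleftrightarrow> odd i \<and> i < 2*t \<or> even i \<and> 2*t + 1 < i"
  unfolding shifted_odds_def by simp

lemma mem_shifted_odds_full:
  assumes "i \<in> {1..n}"
  shows "i \<in> shifted_odds n ((n + 1) div 2) \<longleftrightarrow> odd i"
  using assms unfolding mem_shifted_odds[OF assms] by auto presburger+

lemma card_shifted_odds:
  assumes "2*t \<le> n + 1"
  shows "card (shifted_odds n t) = t + (n div 2 - t)"
proof -
  have odds: "{i\<in>{1..n}. odd i \<and> i < 2*t} = (\<lambda>j. 2*j + 1) ` {..<t}"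
  proof (intro set_eqI iffI)
    fix x assume "x \<in> {i\<in>{1..n}. odd i \<and> i < 2*t}"
    then have "x = 2*(x div 2) + 1" "x div 2 < t" by auto
    then show "x \<in> (\<lambda>j. 2*j + 1) ` {..<t}" by blast
  qed (use assms in auto)
  have evens: "{i\<in>{1..n}. even i \<and> 2*t + 1 < i} = (\<lambda>j. 2*j) ` {t+1..n div 2}"
  proof (intro set_eqI iffI)
    fix x assume "x \<in> {i\<in>{1..n}. even i \<and> 2*t + 1 < i}"
    then have "x = 2*(x div 2)" "x div 2 \<in> {t+1..n div 2}" by (auto simp: div_le_mono)
    then show "x \<in> (\<lambda>j. 2*j) ` {t+1..n div 2}" by blast
  qed auto
  have "shifted_odds n t = {i\<in>{1..n}. odd i \<and> i < 2*t} \<union> {i\<in>{1..n}. even i \<and> 2*t + 1 < i}"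
    unfolding shifted_odds_def by auto
  also have "card \<dots> = t + (n div 2 - t)"
    unfolding odds evens by (subst card_Un_disjoint) (auto simp: card_image inj_on_def)
  finally show ?thesis .
qed

lemma no_adjacent_split_last_two:
  assumes "S \<subseteq> {1..k + 2}" and "no_adjacent S"
  shows "card S = card (S \<inter> {1..k}) + card (S \<inter> {k+1, k+2})" and "card (S \<inter> {k+1, k+2}) \<le> 1"
proof -
  have "S = (S \<inter> {1..k}) \<union> (S \<inter> {k+1, k+2})" using assms(1) by auto
  then have "card S = card ((S \<inter> {1..k}) \<union> (S \<inter> {k+1, k+2}))" by (rule arg_cong)
  also have "\<dots> = card (S \<inter> {1..k}) + card (S \<inter> {k+1, k+2})"
    by (rule card_Un_disjoint) auto
  finally show "card S = card (S \<inter> {1..k}) + card (S \<inter> {k+1, k+2})" .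
  have "k + 2 \<notin> S" if "k + 1 \<in> S"
    using assms(2) that unfolding no_adjacent_def by simp
  then have "S \<inter> {k+1, k+2} = {} \<or> S \<inter> {k+1, k+2} = {k+1} \<or> S \<inter> {k+1, k+2} = {k+2}"
    by auto
  then show "card (S \<inter> {k+1, k+2}) \<le> 1" by (elim disjE) simp_all
qed

lemma card_no_adjacent_le:
  "S \<subseteq> {1..n} \<Longrightarrow> no_adjacent S \<Longrightarrow> card S \<le> (n + 1) div 2"
proof (induction n arbitrary: S rule: less_induct)
  case (less n)
  show ?case
  proof (cases "n < 2")
    case True
    then have "S \<subseteq> {1}" using less.prems(1) by auto
    then have "card S \<le> 1" using card_mono[of "{1}" S] by simp
    show ?thesis
    proof (cases "n = 0")
      case True
      then show ?thesis using less.prems(1) by simp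
    next
      case False
      with \<open>n < 2\<close> \<open>card S \<le> 1\<close> show ?thesis by simp
    qed
  next
    case False
    then obtain k where n: "n = k + 2" by (metis add.commute le_Suc_ex not_less)
    have "no_adjacent (S \<inter> {1..k})" using less.prems(2) unfolding no_adjacent_def by blast
    then have "card (S \<inter> {1..k}) \<le> (k + 1) div 2" using less.IH[of k] n by auto
    moreover have "card S = card (S \<inter> {1..k}) + card (S \<inter> {k+1, k+2})"
      and "card (S \<inter> {k+1, k+2}) \<le> 1"
      using no_adjacent_split_last_two[of S k] less.prems unfolding n by auto
    ultimately show ?thesis unfolding n by linarith
  qed
qed

lemma shifted_odds_extend_odd: "odd k \<Longrightarrow> 2*t = k + 1 \<Longrightarrow> shifted_odds (k + 2) (t + 1) = shifted_odds k t \<union> {k + 2}"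
  unfolding shifted_odds_def by (rule set_eqI) (simp; presburger)

lemma shifted_odds_extend_even: "even k \<Longrightarrow> 2*t \<le> k \<Longrightarrow> shifted_odds (k + 2) t = shifted_odds k t \<union> {k + 2}"
  unfolding shifted_odds_def by (rule set_eqI) (simp; presburger)

lemma shifted_odds_extend_gap: "even k \<Longrightarrow> shifted_odds (k + 2) (k div 2 + 1) = shifted_odds k (k div 2) \<union> {k + 1}"
  unfolding shifted_odds_def by (rule set_eqI) (simp; presburger)

lemma shifted_odds_insert_last:
  assumes t: "t \<le> (k + 1) div 2" "odd k \<longrightarrow> t = (k + 1) div 2"
    and x: "x = k + 1 \<or> x = k + 2" and no_adj: "no_adjacent (shifted_odds k t \<union> {x})"
  shows "\<exists>t'\<le>(k + 3) div 2. (odd k \<longrightarrow> t' = (k + 3) div 2) \<and> shifted_odds k t \<union> {x} = shifted_odds (k + 2) t'"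
  using x
proof
  assume x: "x = k + 1"
  have "k \<notin> shifted_odds k t" using no_adj x unfolding no_adjacent_def by auto
  then have "even k" and "t = k div 2"
    using t mem_shifted_odds[of k k t] by (cases "k = 0"; auto; presburger)+
  then show ?thesis using x shifted_odds_extend_gap[of k] by (intro exI[of _ "k div 2 + 1"]) auto
next
  assume x: "x = k + 2"
  show ?thesis
  proof (cases "odd k")
    case True
    then have "(k + 3) div 2 = t + 1" "2*t = k + 1" using t(2) by presburger+
    then show ?thesis using x True shifted_odds_extend_odd[of k t] by (intro exI[of _ "t + 1"]) auto
  next
    case False
    then have "2*t \<le> k" using t(1) by presburger
    then show ?thesis using x t False shifted_odds_extend_even[of k t] by (intro exI[of _ t]) auto
  qed
qed

lemma no_adjacent_max_eq_shifted_odds: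
  "S \<subseteq> {1..n} \<Longrightarrow> no_adjacent S \<Longrightarrow> card S = (n + 1) div 2 \<Longrightarrow>
   \<exists>t\<le>(n + 1) div 2. (odd n \<longrightarrow> t = (n + 1) div 2) \<and> S = shifted_odds n t"
proof (induction n arbitrary: S rule: less_induct)
  case (less n)
  show ?case
  proof (cases "n < 2")
    case True
    then have "card S = card {1..n}" using less.prems(3) by auto
    then have "S = {1..n}" using less.prems(1) by (simp add: card_subset_eq)
    moreover have "shifted_odds n ((n + 1) div 2) = {1..n}"
      using True shifted_odds_subset mem_shifted_odds_full[of _ n] by fastforce
    ultimately show ?thesis by auto
  next
    case False
    then obtain k where n: "n = k + 2" by (metis add.commute le_Suc_ex not_less)
    let ?S' = "S \<inter> {1..k}"
    have no_adj': "no_adjacent ?S'" using less.prems(2) unfolding no_adjacent_def by blast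
    have "card ?S' \<le> (k + 1) div 2" by (rule card_no_adjacent_le[OF _ no_adj']) auto
    with no_adjacent_split_last_two[of S k] less.prems
    have card_S': "card ?S' = (k + 1) div 2" and card_last: "card (S \<inter> {k+1, k+2}) = 1"
      unfolding n by simp_all
    from card_last obtain x where x: "S \<inter> {k+1, k+2} = {x}" by (rule card_1_singletonE)
    obtain t where t: "t \<le> (k + 1) div 2" "odd k \<longrightarrow> t = (k + 1) div 2" "?S' = shifted_odds k t"
      using less.IH[of k ?S'] n no_adj' card_S' by auto
    have "S = ?S' \<union> (S \<inter> {k+1, k+2})" using less.prems(1) unfolding n by auto
    then have S: "S = shifted_odds k t \<union> {x}" unfolding t(3) x .
    have "x = k + 1 \<or> x = k + 2" using x by auto
    then obtain t' where "t' \<le> (k + 3) div 2" "odd k \<longrightarrow> t' = (k + 3) div 2" "S = shifted_odds n t'"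
      using shifted_odds_insert_last[OF t(1,2)] less.prems(2) unfolding S n by blast
    moreover have "(n + 1) div 2 = (k + 3) div 2" "odd n \<longleftrightarrow> odd k" unfolding n by simp_all
    ultimately show ?thesis by auto
  qed
qed

lemma fst_ribbon_pos_mono: "i \<le> i' \<Longrightarrow> fst (ribbon_pos \<sigma> i) \<le> fst (ribbon_pos \<sigma> i')"
  unfolding ribbon_pos_def by (auto intro!: card_mono finite_subset[of _ "{..<i'}"])

lemma fst_ribbon_pos_Suc_ascent:
  assumes "1 \<le> i" and "\<sigma> i < \<sigma> (Suc i)"
  shows "fst (ribbon_pos \<sigma> (Suc i)) = Suc (fst (ribbon_pos \<sigma> i))"
proof -
  have "{j. 1 \<le> j \<and> j < Suc i \<and> \<sigma> j < \<sigma> (Suc j)} = insert i {j. 1 \<le> j \<and> j < i \<and> \<sigma> j < \<sigma> (Suc j)}"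
    using assms by auto
  moreover have "finite {j. 1 \<le> j \<and> j < i \<and> \<sigma> j < \<sigma> (Suc j)}"
    by (rule finite_subset[of _ "{..<i}"]) auto
  ultimately show ?thesis unfolding ribbon_pos_def by simp
qed

lemma column_boxes_singleton:
  assumes x: "x \<in> {1..n}"
    and left: "x = 1 \<or> \<sigma> (x - 1) < \<sigma> x" and right: "x = n \<or> \<sigma> x < \<sigma> (Suc x)"
  shows "column_boxes n \<sigma> (fst (ribbon_pos \<sigma> x)) = {x}"
proof -
  have "y = x" if y: "y \<in> {1..n}" "fst (ribbon_pos \<sigma> y) = fst (ribbon_pos \<sigma> x)" for y
  proof (rule ccontr)
    assume "y \<noteq> x"
    then consider "y < x" | "x < y" by linarith
    then show False
    proof cases
      case 1
      then have "x \<noteq> 1" "\<sigma> (x - 1) < \<sigma> x" using y left by auto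
      moreover have "1 \<le> x - 1" "Suc (x - 1) = x" using \<open>x \<noteq> 1\<close> x by auto
      ultimately have "fst (ribbon_pos \<sigma> x) = Suc (fst (ribbon_pos \<sigma> (x - 1)))"
        using fst_ribbon_pos_Suc_ascent[of "x - 1" \<sigma>] by simp
      moreover have "fst (ribbon_pos \<sigma> y) \<le> fst (ribbon_pos \<sigma> (x - 1))"
        using 1 by (intro fst_ribbon_pos_mono) simp
      ultimately show False using y by simp
    next
      case 2
      then have "\<sigma> x < \<sigma> (Suc x)" using y right by auto
      then have "fst (ribbon_pos \<sigma> (Suc x)) = Suc (fst (ribbon_pos \<sigma> x))"
        using fst_ribbon_pos_Suc_ascent[of x \<sigma>] x by simp
      moreover have "fst (ribbon_pos \<sigma> (Suc x)) \<le> fst (ribbon_pos \<sigma> y)"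
        using 2 by (intro fst_ribbon_pos_mono) simp
      ultimately show False using y by simp
    qed
  qed
  then show ?thesis using x unfolding column_boxes_def by auto
qed

lemma no_ascent_through_box:
  assumes column_size: "\<forall>y\<in>ribbon_columns n \<sigma>. card (column_boxes n \<sigma> y) \<ge> 2" and x: "x \<in> {1..n}"
  shows "\<not> ((x = 1 \<or> \<sigma> (x - 1) < \<sigma> x) \<and> (x = n \<or> \<sigma> x < \<sigma> (Suc x)))"
proof
  assume "(x = 1 \<or> \<sigma> (x - 1) < \<sigma> x) \<and> (x = n \<or> \<sigma> x < \<sigma> (Suc x))"
  then have "column_boxes n \<sigma> (fst (ribbon_pos \<sigma> x)) = {x}"
    using x by (intro column_boxes_singleton) auto
  moreover have "fst (ribbon_pos \<sigma> x) \<in> ribbon_columns n \<sigma>"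
    unfolding ribbon_columns_def using x by blast
  then have "card (column_boxes n \<sigma> (fst (ribbon_pos \<sigma> x))) \<ge> 2"
    using column_size by blast
  ultimately show False by simp
qed

lemma card_ribbon_columns_le_1:
  assumes "\<And>i. i \<in> {1..<n} \<Longrightarrow> \<not> \<sigma> i < \<sigma> (Suc i)"
  shows "card (ribbon_columns n \<sigma>) \<le> 1"
proof -
  have "fst (ribbon_pos \<sigma> i) = 0" if "i \<in> {1..n}" for i
  proof -
    have "{j. 1 \<le> j \<and> j < i \<and> \<sigma> j < \<sigma> (Suc j)} = {}" using assms that by auto
    then show ?thesis unfolding ribbon_pos_def by simp
  qed
  then have "ribbon_columns n \<sigma> \<subseteq> {0}" unfolding ribbon_columns_def by auto
  then have "card (ribbon_columns n \<sigma>) \<le> card {0::nat}" by (rule card_mono[rotated]) simp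
  then show ?thesis by simp
qed

text \<open>The ribbon hypotheses force a peak or a valley of \<open>\<sigma>\<close> at an even interior position:
  otherwise consecutive steps \<open>2j - 1, 2j\<close> would go the same way, no two consecutive
  steps are ascents (no column has a single box), and the last step is a descent, so
  all steps would be descents and the ribbon would have only one column.\<close>

lemma even_turn_exists:
  assumes bij: "bij_betw \<sigma> {1..n} {1..n}"
    and columns: "card (ribbon_columns n \<sigma>) \<ge> 2"
    and column_size: "\<forall>x\<in>ribbon_columns n \<sigma>. card (column_boxes n \<sigma> x) \<ge> 2"
  shows "\<exists>p. even p \<and> 2 \<le> p \<and> p < n \<and> zigzag \<sigma> (p - 1) = zigzag \<sigma> p"
proof (rule ccontr)
  assume no_turn: "\<not> ?thesis"
  let ?ascent = "\<lambda>i. \<sigma> i < \<sigma> (Suc i)"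
  note not_alone = no_ascent_through_box[OF column_size]
  have distinct: "\<sigma> i \<noteq> \<sigma> (Suc i)" if "i \<in> {1..<n}" for i
    using bij_betw_imp_inj_on[OF bij] that by (auto dest: inj_onD)
  have same_way: "?ascent (p - 1) \<longleftrightarrow> ?ascent p" if "even p" "2 \<le> p" "p < n" for p
  proof -
    have "odd (p - 1)" "Suc (p - 1) = p" using that by auto
    then show ?thesis
      using no_turn distinct[of p] that unfolding zigzag_def by auto
  qed
  have odd_descent: "\<not> ?ascent i" if "odd i" "i \<in> {1..<n}" for i
  proof (cases "Suc i < n")
    case True
    then show ?thesis
      using same_way[of "Suc i"] not_alone[of "Suc i"] that by auto
  next
    case False
    then have "n = Suc i" using that by auto
    then show ?thesis using not_alone[of n] that by auto
  qed
  have "\<not> ?ascent i" if "i \<in> {1..<n}" for i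
  proof (cases "odd i")
    case False
    then have "odd (i - 1)" "i \<ge> 2" using that by (auto elim: oddE)
    moreover have "i - 1 \<in> {1..<n}" "Suc (i - 1) = i" using \<open>i \<ge> 2\<close> that by auto
    ultimately have "\<not> \<sigma> (i - 1) < \<sigma> i" using odd_descent[of "i - 1"] by simp
    then show ?thesis using same_way[of i] False \<open>i \<ge> 2\<close> that by simp
  qed (use odd_descent that in blast)
  then show False using card_ribbon_columns_le_1[of n \<sigma>] columns by simp
qed

lemma card_add_le_of_disjoint_images:
  assumes "inj_on f A" "inj_on g B" "f ` A \<inter> g ` B = {}" and C: "f ` A \<union> g ` B \<subseteq> C" "finite C"
  shows "card A + card B \<le> card C"
proof -
  have "finite (f ` A \<union> g ` B)" using finite_subset[OF C] .
  then have "card A + card B = card (f ` A \<union> g ` B)"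
    using assms(1-3) by (simp add: card_Un_disjoint card_image)
  also have "\<dots> \<le> card C" using card_mono[OF C(2,1)] .
  finally show ?thesis .
qed

lemma card_le_add_of_subset_images:
  assumes "C \<subseteq> f ` A \<union> g ` B" "finite A" "finite B"
  shows "card C \<le> card A + card B"
proof -
  have "card C \<le> card (f ` A \<union> g ` B)" using assms by (intro card_mono) simp_all
  also have "\<dots> \<le> card (f ` A) + card (g ` B)" by (rule card_Un_le)
  also have "\<dots> \<le> card A + card B" by (intro add_mono card_image_le assms(2,3))
  finally show ?thesis .
qed

lemma position_colorings_value:
  assumes "d \<in> position_colorings n \<sigma> k a" and "i \<in> {1..n}"
  shows "d i \<ge> 1" and "a (d i) \<noteq> 0"
proof -
  show "d i \<ge> 1" using assms by (simp add: position_colorings_def proper_positions_def)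
  moreover have "color_count n d (d i) \<noteq> 0" using assms(2) by (auto simp: color_count_def)
  ultimately show "a (d i) \<noteq> 0" using assms(1) by (simp add: position_colorings_def)
qed

lemma finite_position_colorings:
  assumes "finite {j. a j \<noteq> 0}"
  shows "finite (position_colorings n \<sigma> k a)"
proof (rule finite_subset)
  show "position_colorings n \<sigma> k a \<subseteq>
      {f. \<forall>x. (x \<in> {1..n} \<longrightarrow> f x \<in> {j. a j \<noteq> 0}) \<and> (x \<notin> {1..n} \<longrightarrow> f x = 0)}"
    using position_colorings_value(2)
    by (auto simp: position_colorings_def proper_positions_def)
  show "finite {f. \<forall>x. (x \<in> {1..n} \<longrightarrow> f x \<in> {j. a j \<noteq> 0}) \<and> (x \<notin> {1..n} \<longrightarrow> f x = (0::nat))}"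
    using assms by (intro finite_set_of_finite_funs) simp_all
qed

lemma no_adjacent_color_class:
  assumes "proper_positions n d"
  shows "no_adjacent {i\<in>{1..n}. d i = j}"
  using assms unfolding no_adjacent_def proper_positions_def by auto

text \<open>The two contents differ by the cyclic relabelling
  \<open>1 \<mapsto> 2 \<mapsto> 3 \<mapsto> 1\<close> of the colors.\<close>

definition coloring_132 :: "nat \<Rightarrow> nat set \<Rightarrow> nat \<Rightarrow> nat \<Rightarrow> nat" where
  "coloring_132 n X q i = (if i \<in> {1..n} then if i \<in> X then 1 else if i = q then 3 else 2 else 0)"

definition coloring_213 :: "nat \<Rightarrow> nat set \<Rightarrow> nat \<Rightarrow> nat \<Rightarrow> nat" where
  "coloring_213 n X q i = (if i \<in> {1..n} then if i \<in> X then 2 else if i = q then 1 else 3 else 0)"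

definition content_132 :: "nat \<Rightarrow> nat \<Rightarrow> nat" where
  "content_132 n j = (if j = 1 then (n + 1) div 2 else if j = 2 then n div 2 - 1 else if j = 3 then 1 else 0)"

definition content_213 :: "nat \<Rightarrow> nat \<Rightarrow> nat" where
  "content_213 n j = (if j = 1 then 1 else if j = 2 then (n + 1) div 2 else if j = 3 then n div 2 - 1 else 0)"

definition tail_balanced :: "nat \<Rightarrow> (nat \<Rightarrow> nat) \<Rightarrow> nat \<Rightarrow> bool" where
  "tail_balanced n \<sigma> m \<longleftrightarrow> card {m..<n} = 2 * card {i\<in>{m..<n}. zigzag \<sigma> i}"

lemma tail_balanced_imp_even: "tail_balanced n \<sigma> m \<Longrightarrow> m \<le> n \<Longrightarrow> even (n - m)"
  unfolding tail_balanced_def by (metis card_atLeastLessThan dvd_triv_left)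

lemma proper_positions_coloring_132:
  assumes "no_adjacent X"
    and "\<And>i. i \<in> {1..<n} \<Longrightarrow> i \<in> X \<or> Suc i \<in> X \<or> i = q \<or> Suc i = q"
  shows "proper_positions n (coloring_132 n X q)"
  unfolding proper_positions_def
proof (intro conjI allI impI ballI)
  fix i assume "1 \<le> i \<and> i < n"
  then have "i \<in> {1..<n}" "i \<in> {1..n}" "Suc i \<in> {1..n}" by auto
  then consider "i \<in> X" | "Suc i \<in> X" | "i = q" | "Suc i = q" using assms(2) by blast
  then show "coloring_132 n X q i \<noteq> coloring_132 n X q (Suc i)"
    using assms(1) \<open>i \<in> {1..n}\<close> \<open>Suc i \<in> {1..n}\<close>
    by cases (auto simp: coloring_132_def no_adjacent_def)
qed (auto simp: coloring_132_def)

lemma color_count_coloring_132: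
  assumes X: "X \<subseteq> {1..n}" and q: "q \<in> {1..n}" "q \<notin> X" and card_X: "card X = (n + 1) div 2"
    and "j \<ge> 1"
  shows "color_count n (coloring_132 n X q) j = content_132 n j"
proof -
  have "finite X" using X finite_subset by blast
  consider "j = 1" | "j = 2" | "j = 3" | "j \<notin> {1, 2, 3}" by auto
  then show ?thesis
  proof cases
    case 1
    then have "{i\<in>{1..n}. coloring_132 n X q i = j} = X"
      using X unfolding coloring_132_def by auto
    then show ?thesis using 1 card_X unfolding color_count_def content_132_def by simp
  next
    case 2
    then have "{i\<in>{1..n}. coloring_132 n X q i = j} = {1..n} - X - {q}"
      unfolding coloring_132_def by auto
    moreover have "card ({1..n} - X - {q}) = n div 2 - 1"
      using X q card_X \<open>finite X\<close> by (simp add: card_Diff_subset card_Diff_singleton)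
    ultimately show ?thesis using 2 unfolding color_count_def content_132_def by simp
  next
    case 3
    then have "{i\<in>{1..n}. coloring_132 n X q i = j} = {q}"
      using q unfolding coloring_132_def by auto
    then show ?thesis using 3 unfolding color_count_def content_132_def by simp
  next
    case 4
    then have "{i\<in>{1..n}. coloring_132 n X q i = j} = {}"
      unfolding coloring_132_def by auto
    then show ?thesis using 4 unfolding color_count_def content_132_def by simp
  qed
qed

lemma coloring_132_eq_3_iff: "coloring_132 n X q i = 3 \<longleftrightarrow> i \<in> {1..n} \<and> i \<notin> X \<and> i = q"
  unfolding coloring_132_def by auto

lemma coloring_132_odds:
  "i \<in> {1..n} \<Longrightarrow> coloring_132 n (shifted_odds n ((n + 1) div 2)) p i = (if odd i then 1 else if i = p then 3 else 2)"
  unfolding coloring_132_def using mem_shifted_odds_full[of i n] by simp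

lemma zigzag_breaks_coloring_132_odds:
  assumes "even p"
  shows "zigzag_breaks n (coloring_132 n (shifted_odds n ((n + 1) div 2)) p) = {}"
proof -
  have "zigzag (coloring_132 n (shifted_odds n ((n + 1) div 2)) p) i" if "i \<in> {1..<n}" for i
    using that assms coloring_132_odds[of i n p] coloring_132_odds[of "Suc i" n p]
    unfolding zigzag_def by (cases "odd i") auto
  then show ?thesis unfolding zigzag_breaks_def by auto
qed

lemma zigzag_breaks_coloring_132_gap:
  assumes "even n" "1 \<le> s" "2*s < n"
  shows "zigzag_breaks n (coloring_132 n (shifted_odds n s) (2*s + 1)) = {2*s..<n}"
  unfolding zigzag_breaks_def zigzag_def coloring_132_def shifted_odds_def using assms by auto

lemma coloring_132_odds_in_position_colorings:
  assumes inj: "inj_on \<sigma> {1..n}" and p: "even p" "p \<in> {2..n}"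
  shows "coloring_132 n (shifted_odds n ((n + 1) div 2)) p \<in> position_colorings n \<sigma> (zigzag_count n \<sigma>) (content_132 n)"
proof -
  let ?X = "shifted_odds n ((n + 1) div 2)"
  have p_X: "p \<in> {1..n}" "p \<notin> ?X" using p mem_shifted_odds_full[of p n] by auto
  have proper: "proper_positions n (coloring_132 n ?X p)"
  proof (rule proper_positions_coloring_132[OF no_adjacent_shifted_odds])
    fix i assume "i \<in> {1..<n}"
    then show "i \<in> ?X \<or> Suc i \<in> ?X \<or> i = p \<or> Suc i = p"
      using mem_shifted_odds_full[of i n] mem_shifted_odds_full[of "Suc i" n] by auto
  qed
  moreover have "card ?X = (n + 1) div 2" by (simp add: card_shifted_odds)
  ultimately show ?thesis
    using position_asc_eq_iff[OF inj proper] zigzag_breaks_coloring_132_odds[OF p(1)]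
      color_count_coloring_132[OF shifted_odds_subset p_X]
    by (simp add: position_colorings_def)
qed

lemma coloring_132_gap_in_position_colorings:
  assumes inj: "inj_on \<sigma> {1..n}" and s: "s \<in> {1..<n div 2}" and balanced: "tail_balanced n \<sigma> (2*s)"
  shows "coloring_132 n (shifted_odds n s) (2*s + 1) \<in> position_colorings n \<sigma> (zigzag_count n \<sigma>) (content_132 n)"
proof -
  let ?X = "shifted_odds n s"
  have "2*s < n" using s by auto
  then have "even n" using tail_balanced_imp_even[OF balanced] by simp
  have q_X: "2*s + 1 \<in> {1..n}" "2*s + 1 \<notin> ?X" using \<open>2*s < n\<close> mem_shifted_odds[of "2*s + 1" n s] by auto
  have proper: "proper_positions n (coloring_132 n ?X (2*s + 1))"
  proof (rule proper_positions_coloring_132[OF no_adjacent_shifted_odds])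
    fix i assume "i \<in> {1..<n}"
    then show "i \<in> ?X \<or> Suc i \<in> ?X \<or> i = 2*s + 1 \<or> Suc i = 2*s + 1"
      using mem_shifted_odds[of i n s] mem_shifted_odds[of "Suc i" n s] by auto
  qed
  moreover have "card ?X = (n + 1) div 2"
    using s \<open>2*s < n\<close> \<open>even n\<close> card_shifted_odds[of s n] by simp
  moreover have "zigzag_breaks n (coloring_132 n ?X (2*s + 1)) = {2*s..<n}"
    using zigzag_breaks_coloring_132_gap[OF \<open>even n\<close> _ \<open>2*s < n\<close>] s by simp
  ultimately show ?thesis
    using position_asc_eq_iff[OF inj proper] balanced color_count_coloring_132[OF shifted_odds_subset q_X]
    unfolding tail_balanced_def by (simp add: position_colorings_def)
qed

lemma card_position_colorings_132_ge:
  assumes inj: "inj_on \<sigma> {1..n}"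
  shows "card {p\<in>{2..n}. even p} + card {s\<in>{1..<n div 2}. tail_balanced n \<sigma> (2*s)}
         \<le> card (position_colorings n \<sigma> (zigzag_count n \<sigma>) (content_132 n))"
proof -
  define E where "E = {p\<in>{2..n}. even p}"
  define T where "T = {s\<in>{1..<n div 2}. tail_balanced n \<sigma> (2*s)}"
  define f where "f p = coloring_132 n (shifted_odds n ((n + 1) div 2)) p" for p
  define g where "g s = coloring_132 n (shifted_odds n s) (2*s + 1)" for s
  have f_3: "f p i = 3 \<longleftrightarrow> i = p" if "p \<in> E" for p i
    using that mem_shifted_odds_full[of p n] unfolding f_def E_def coloring_132_eq_3_iff by auto
  have g_3: "g s i = 3 \<longleftrightarrow> i = 2*s + 1" if "s \<in> T" for s i
  proof -
    have "2*s + 1 \<in> {1..n}" using that unfolding T_def by auto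
    then show ?thesis
      using mem_shifted_odds[of "2*s + 1" n s] unfolding g_def coloring_132_eq_3_iff by auto
  qed
  have "inj_on f E"
  proof (rule inj_onI)
    fix p p' assume "p \<in> E" "p' \<in> E" "f p = f p'"
    then show "p = p'" using f_3[of p p] f_3[of p' p] by simp
  qed
  moreover have "inj_on g T"
  proof (rule inj_onI)
    fix s s' assume "s \<in> T" "s' \<in> T" "g s = g s'"
    then show "s = s'" using g_3[of s "2*s + 1"] g_3[of s' "2*s + 1"] by simp
  qed
  moreover have "f ` E \<inter> g ` T = {}"
  proof -
    have "f p \<noteq> g s" if "p \<in> E" "s \<in> T" for p s
    proof
      assume "f p = g s"
      then have "g s p = 3" using f_3[OF that(1), of p] by simp
      then have "p = 2*s + 1" using g_3[OF that(2)] by simp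
      then show False using that(1) unfolding E_def by simp
    qed
    then show ?thesis by blast
  qed
  moreover have "f ` E \<union> g ` T \<subseteq> position_colorings n \<sigma> (zigzag_count n \<sigma>) (content_132 n)"
    using coloring_132_odds_in_position_colorings[OF inj] coloring_132_gap_in_position_colorings[OF inj]
    unfolding f_def g_def E_def T_def by auto
  moreover have "finite (position_colorings n \<sigma> (zigzag_count n \<sigma>) (content_132 n))"
    by (rule finite_position_colorings, rule finite_subset[of _ "{1, 2, 3}"])
      (auto simp: content_132_def)
  ultimately show ?thesis unfolding E_def T_def by (rule card_add_le_of_disjoint_images)
qed

lemma coloring_213_shifted_odds:
  "i \<in> {1..n} \<Longrightarrow> coloring_213 n (shifted_odds n t) p i =
     (if odd i \<and> i < 2*t \<or> even i \<and> 2*t + 1 < i then 2 else if i = p then 1 else 3)"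
  unfolding coloring_213_def using mem_shifted_odds[of i n t] by simp

lemma zigzag_breaks_coloring_213_odds:
  assumes "even p"
  shows "zigzag_breaks n (coloring_213 n (shifted_odds n ((n + 1) div 2)) p) = {i\<in>{1..<n}. i = p \<or> Suc i = p}"
proof -
  have "\<not> zigzag (coloring_213 n (shifted_odds n ((n + 1) div 2)) p) i \<longleftrightarrow> i = p \<or> Suc i = p"
    if "i \<in> {1..<n}" for i
  proof -
    have "i \<in> shifted_odds n ((n + 1) div 2) \<longleftrightarrow> odd i"
      and "Suc i \<in> shifted_odds n ((n + 1) div 2) \<longleftrightarrow> odd (Suc i)"
      using that mem_shifted_odds_full[of i n] mem_shifted_odds_full[of "Suc i" n] by auto
    then show ?thesis
      using that assms unfolding zigzag_def coloring_213_def by (cases "odd i") auto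
  qed
  then show ?thesis by (rule zigzag_breaks_eqI)
qed

lemma zigzag_breaks_coloring_213_gap:
  "zigzag_breaks n (coloring_213 n (shifted_odds n t) (2*t + 1)) = {2*t + 2..<n}"
proof -
  have "\<not> zigzag (coloring_213 n (shifted_odds n t) (2*t + 1)) i \<longleftrightarrow> 2*t + 2 \<le> i"
    if "i \<in> {1..<n}" for i
    using that coloring_213_shifted_odds[of i n t] coloring_213_shifted_odds[of "Suc i" n t]
    unfolding zigzag_def by simp presburger
  then have "zigzag_breaks n (coloring_213 n (shifted_odds n t) (2*t + 1)) = {i\<in>{1..<n}. 2*t + 2 \<le> i}"
    by (rule zigzag_breaks_eqI)
  also have "\<dots> = {2*t + 2..<n}" by auto
  finally show ?thesis .
qed

lemma zigzag_breaks_coloring_213_evens: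
  assumes "odd p" "3 \<le> p"
  shows "zigzag_breaks n (coloring_213 n (shifted_odds n 0) p) = {1..<n} - {p - 1, p}"
proof -
  have "\<not> zigzag (coloring_213 n (shifted_odds n 0) p) i \<longleftrightarrow> i \<noteq> p - 1 \<and> i \<noteq> p"
    if "i \<in> {1..<n}" for i
    using that assms coloring_213_shifted_odds[of i n 0] coloring_213_shifted_odds[of "Suc i" n 0]
    unfolding zigzag_def by simp presburger
  then have "zigzag_breaks n (coloring_213 n (shifted_odds n 0) p) = {i\<in>{1..<n}. i \<noteq> p - 1 \<and> i \<noteq> p}"
    by (rule zigzag_breaks_eqI)
  also have "\<dots> = {1..<n} - {p - 1, p}" by auto
  finally show ?thesis .
qed

lemma zigzag_breaks_coloring_213_before_gap:
  assumes "1 \<le> t"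
  shows "zigzag_breaks n (coloring_213 n (shifted_odds n t) (2*t)) = {2*t - 1..<n}"
proof -
  have "\<not> zigzag (coloring_213 n (shifted_odds n t) (2*t)) i \<longleftrightarrow> 2*t \<le> Suc i"
    if "i \<in> {1..<n}" for i
  proof -
    have "i \<in> {1..n}" "Suc i \<in> {1..n}" using that by auto
    then show ?thesis
      using assms unfolding zigzag_def coloring_213_shifted_odds[OF \<open>i \<in> {1..n}\<close>]
        coloring_213_shifted_odds[OF \<open>Suc i \<in> {1..n}\<close>]
      by (cases "odd i") (auto elim!: oddE evenE, presburger+)
  qed
  then have "zigzag_breaks n (coloring_213 n (shifted_odds n t) (2*t)) = {i\<in>{1..<n}. 2*t \<le> Suc i}"
    by (rule zigzag_breaks_eqI)
  also have "\<dots> = {2*t - 1..<n}" using assms by auto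
  finally show ?thesis .
qed

lemma position_colorings_213_form:
  assumes d: "d \<in> position_colorings n \<sigma> k (content_213 n)"
  obtains t p where "t \<le> (n + 1) div 2" "odd n \<Longrightarrow> t = (n + 1) div 2"
    and "p \<in> {1..n}" "p \<notin> shifted_odds n t" "d = coloring_213 n (shifted_odds n t) p"
proof -
  have proper: "proper_positions n d" and count: "\<And>j. j \<ge> 1 \<Longrightarrow> color_count n d j = content_213 n j"
    using d by (auto simp: position_colorings_def)
  have colors: "d i \<in> {1, 2, 3}" if "i \<in> {1..n}" for i
    using position_colorings_value[OF d that] by (auto simp: content_213_def split: if_splits)
  define S where "S = {i\<in>{1..n}. d i = 2}"
  have "no_adjacent S" unfolding S_def by (rule no_adjacent_color_class[OF proper])
  moreover have "card S = (n + 1) div 2"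
    using count[of 2] by (simp add: S_def color_count_def content_213_def)
  moreover have "S \<subseteq> {1..n}" unfolding S_def by auto
  ultimately obtain t where t: "t \<le> (n + 1) div 2" "odd n \<longrightarrow> t = (n + 1) div 2" "S = shifted_odds n t"
    using no_adjacent_max_eq_shifted_odds by blast
  have "card {i\<in>{1..n}. d i = 1} = 1"
    using count[of 1] by (simp add: color_count_def content_213_def)
  then obtain p where p: "{i\<in>{1..n}. d i = 1} = {p}" by (rule card_1_singletonE)
  have "p \<in> {1..n}" "d p = 1" using p by auto
  have "d i = coloring_213 n (shifted_odds n t) p i" for i
  proof (cases "i \<in> {1..n}")
    case True
    have "i \<in> shifted_odds n t \<longleftrightarrow> d i = 2" using True unfolding t(3)[symmetric] S_def by simp
    moreover have "i \<in> {i\<in>{1..n}. d i = 1} \<longleftrightarrow> i \<in> {p}" by (simp only: p)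
    then have "d i = 1 \<longleftrightarrow> i = p" using True by simp
    ultimately show ?thesis using colors[OF True] True unfolding coloring_213_def by auto
  next
    case False
    then show ?thesis using proper unfolding proper_positions_def coloring_213_def by auto
  qed
  moreover have "p \<notin> shifted_odds n t" using \<open>d p = 1\<close> \<open>p \<in> {1..n}\<close> unfolding t(3)[symmetric] S_def by simp
  ultimately show thesis using that t \<open>p \<in> {1..n}\<close> by blast
qed

lemma card_zigzag_breaks_eq_double:
  assumes "inj_on \<sigma> {1..n}" and "d \<in> position_colorings n \<sigma> (zigzag_count n \<sigma>) a"
  shows "card (zigzag_breaks n d) = 2 * card {i\<in>zigzag_breaks n d. zigzag \<sigma> i}"
proof -
  from assms(2) have "proper_positions n d" and "position_asc n \<sigma> d = zigzag_count n \<sigma>"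
    unfolding position_colorings_def by blast+
  then show ?thesis using position_asc_eq_iff[OF assms(1)] by blast
qed

lemma coloring_213_odds_turn:
  assumes inj: "inj_on \<sigma> {1..n}" and p: "even p" "p \<in> {1..n}"
    and d: "coloring_213 n (shifted_odds n ((n + 1) div 2)) p \<in> position_colorings n \<sigma> (zigzag_count n \<sigma>) a"
  shows "p < n" and "zigzag \<sigma> (p - 1) \<noteq> zigzag \<sigma> p"
proof -
  let ?B = "zigzag_breaks n (coloring_213 n (shifted_odds n ((n + 1) div 2)) p)"
  have balanced: "card ?B = 2 * card {i\<in>?B. zigzag \<sigma> i}" by (rule card_zigzag_breaks_eq_double[OF inj d])
  have B: "?B = {i\<in>{1..<n}. i = p \<or> Suc i = p}" by (rule zigzag_breaks_coloring_213_odds[OF p(1)])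
  have "p \<ge> 2" using p by (auto elim: evenE)
  show "p < n"
  proof (rule ccontr)
    assume "\<not> p < n"
    then have "?B = {p - 1}" unfolding B using p \<open>p \<ge> 2\<close> by auto
    then show False using balanced by simp
  qed
  then have B2: "?B = {p - 1, p}" unfolding B using \<open>p \<ge> 2\<close> by auto
  show "zigzag \<sigma> (p - 1) \<noteq> zigzag \<sigma> p"
  proof
    assume same: "zigzag \<sigma> (p - 1) = zigzag \<sigma> p"
    have "card ?B = 2" unfolding B2 using \<open>p \<ge> 2\<close> by simp
    moreover have "{i\<in>?B. zigzag \<sigma> i} = (if zigzag \<sigma> p then ?B else {})"
      unfolding B2 using same by auto
    ultimately show False using balanced by (simp split: if_splits)
  qed
qed

lemma coloring_213_gap_tail_balanced:
  assumes inj: "inj_on \<sigma> {1..n}" and n: "even n" and t: "t < n div 2"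
    and p: "p \<in> {1..n}" "p \<notin> shifted_odds n t"
    and d: "coloring_213 n (shifted_odds n t) p \<in> position_colorings n \<sigma> (zigzag_count n \<sigma>) a"
  shows "p = 2*t + 1" and "tail_balanced n \<sigma> (2*t + 2)"
proof -
  let ?d = "coloring_213 n (shifted_odds n t) p"
  have balanced: "card (zigzag_breaks n ?d) = 2 * card {i\<in>zigzag_breaks n ?d. zigzag \<sigma> i}"
    by (rule card_zigzag_breaks_eq_double[OF inj d])
  have "2*t + 1 < n" using n t by auto
  \<comment> \<open>Any other place for color \<open>1\<close> leaves an odd number of breaks.\<close>
  show "p = 2*t + 1"
  proof (rule ccontr)
    assume p_ne: "p \<noteq> 2*t + 1"
    show False
    proof (cases "t = 0")
      case True
      then have "odd p" "3 \<le> p"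
        using p p_ne mem_shifted_odds[of p n 0] by (auto elim!: evenE oddE)
      moreover have "p \<le> n" using p by simp
      ultimately have "p < n" using n by presburger
      then have "zigzag_breaks n ?d = {1..<n} - {p - 1, p}"
        using zigzag_breaks_coloring_213_evens[OF \<open>odd p\<close> \<open>3 \<le> p\<close>] True by simp
      moreover have "{p - 1, p} \<subseteq> {1..<n}" "card {p - 1, p} = 2"
        using \<open>3 \<le> p\<close> \<open>p < n\<close> by auto
      ultimately have "card (zigzag_breaks n ?d) = n - 3" by (simp add: card_Diff_subset)
      then show False using balanced n \<open>3 \<le> p\<close> \<open>p < n\<close> by presburger
    next
      case False
      have gap: "2*t \<in> {1..n}" "2*t \<notin> shifted_odds n t" "2*t + 1 \<in> {1..n}" "2*t + 1 \<notin> shifted_odds n t"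
        using False \<open>2*t + 1 < n\<close> mem_shifted_odds[of "2*t" n t] mem_shifted_odds[of "2*t + 1" n t] by auto
      have "?d (2*t) \<noteq> ?d (Suc (2*t))"
        using d gap \<open>2*t + 1 < n\<close> by (auto simp: position_colorings_def proper_positions_def)
      then have "p = 2*t" using gap p_ne unfolding coloring_213_def by (auto split: if_splits)
      then have "card (zigzag_breaks n ?d) = n - (2*t - 1)"
        using zigzag_breaks_coloring_213_before_gap[of t n] False by simp
      then show False using balanced n False \<open>2*t + 1 < n\<close> by presburger
    qed
  qed
  then have "zigzag_breaks n ?d = {2*t + 2..<n}"
    using zigzag_breaks_coloring_213_gap[of n t] by simp
  then show "tail_balanced n \<sigma> (2*t + 2)" using balanced unfolding tail_balanced_def by simp
qed

lemma card_position_colorings_213_le: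
  assumes inj: "inj_on \<sigma> {1..n}"
  shows "card (position_colorings n \<sigma> (zigzag_count n \<sigma>) (content_213 n))
    \<le> card {p\<in>{2..<n}. even p \<and> zigzag \<sigma> (p - 1) \<noteq> zigzag \<sigma> p}
      + card {t\<in>{..<n div 2}. tail_balanced n \<sigma> (2*t + 2)}"
proof -
  define A where "A = {p\<in>{2..<n}. even p \<and> zigzag \<sigma> (p - 1) \<noteq> zigzag \<sigma> p}"
  define T where "T = {t\<in>{..<n div 2}. tail_balanced n \<sigma> (2*t + 2)}"
  define f where "f p = coloring_213 n (shifted_odds n ((n + 1) div 2)) p" for p
  define g where "g t = coloring_213 n (shifted_odds n t) (2*t + 1)" for t
  have "position_colorings n \<sigma> (zigzag_count n \<sigma>) (content_213 n) \<subseteq> f ` A \<union> g ` T"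
  proof
    fix d assume d: "d \<in> position_colorings n \<sigma> (zigzag_count n \<sigma>) (content_213 n)"
    then obtain t p where t: "t \<le> (n + 1) div 2" "odd n \<Longrightarrow> t = (n + 1) div 2"
      and p: "p \<in> {1..n}" "p \<notin> shifted_odds n t" and d_eq: "d = coloring_213 n (shifted_odds n t) p"
      using position_colorings_213_form[OF d] by blast
    show "d \<in> f ` A \<union> g ` T"
    proof (cases "t = (n + 1) div 2")
      case True
      then have "even p" using p mem_shifted_odds_full[of p n] by simp
      moreover have "p \<ge> 2" using \<open>even p\<close> p by (auto elim: evenE)
      ultimately have "p \<in> A" "d = f p"
        using coloring_213_odds_turn[OF inj _ p(1)] d unfolding d_eq True A_def f_def by auto
      then show ?thesis by blast
    next
      case False
      then have "even n" using t(2) by blast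
      then have "t < n div 2" using t(1) False by presburger
      moreover have "coloring_213 n (shifted_odds n t) p \<in> position_colorings n \<sigma> (zigzag_count n \<sigma>) (content_213 n)"
        using d unfolding d_eq .
      ultimately have "p = 2*t + 1" "tail_balanced n \<sigma> (2*t + 2)"
        using coloring_213_gap_tail_balanced[OF inj \<open>even n\<close> _ p] by blast+
      then have "t \<in> T" "d = g t" using \<open>t < n div 2\<close> unfolding T_def g_def d_eq by auto
      then show ?thesis by blast
    qed
  qed
  then show ?thesis unfolding A_def T_def by (rule card_le_add_of_subset_images) simp_all
qed

definition rotate_colors :: "nat \<Rightarrow> nat" where
  "rotate_colors j = (if j = 1 then 2 else if j = 2 then 3 else if j = 3 then 1 else j)"

lemma bij_rotate_colors: "bij_betw rotate_colors {1..} {1..}"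
proof (rule bij_betw_byWitness[where f' = "rotate_colors ^^ 2"])
  show "\<forall>j\<in>{1..}. (rotate_colors ^^ 2) (rotate_colors j) = j"
    and "\<forall>j\<in>{1..}. rotate_colors ((rotate_colors ^^ 2) j) = j"
    by (simp_all add: rotate_colors_def numeral_2_eq_2)
  show "rotate_colors ` {1..} \<subseteq> {1..}" and "(rotate_colors ^^ 2) ` {1..} \<subseteq> {1..}"
    by (auto simp: rotate_colors_def numeral_2_eq_2)
qed

lemma content_213_rotate_colors: "(\<lambda>j. content_213 n (rotate_colors j)) = content_132 n"
  unfolding content_213_def content_132_def rotate_colors_def by auto

lemma card_even_atLeastAtMost: "card {p\<in>{2..m}. even p} = m div 2"
proof -
  have "{p\<in>{2..m}. even p} = (\<lambda>j. 2*j) ` {1..m div 2}"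
    by (auto elim!: evenE simp: image_iff)
  then show ?thesis by (simp add: card_image inj_on_def)
qed

text \<open>Shifting by one, \<open>t \<mapsto> t + 1\<close>, maps the balanced tails met in the upper bound into
  those of the lower bound, except for the empty tail \<open>t + 1 = n div 2\<close>, which is balanced
  exactly when \<open>n\<close> is even.\<close>

lemma card_tail_balanced_shift:
  "card {t\<in>{..<n div 2}. tail_balanced n \<sigma> (2*t + 2)} + (n - 1) div 2
     \<le> card {s\<in>{1..<n div 2}. tail_balanced n \<sigma> (2*s)} + n div 2"
proof -
  let ?A = "{t\<in>{..<n div 2}. tail_balanced n \<sigma> (2*t + 2)}"
  let ?B = "{s\<in>{1..<n div 2}. tail_balanced n \<sigma> (2*s)}"
  have card_A: "card ?A = card (Suc ` ?A)" by (simp add: card_image)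
  show ?thesis
  proof (cases "odd n")
    case True
    have "2 * (n div 2) = n - 1" using True by presburger
    then have unbalanced: "\<not> tail_balanced n \<sigma> (2 * (n div 2))"
      using True tail_balanced_imp_even[of n \<sigma> "n - 1"] by (cases n) auto
    have "Suc t \<in> ?B" if "t \<in> ?A" for t
    proof -
      have "Suc t \<noteq> n div 2"
      proof
        assume "Suc t = n div 2"
        then have "2*t + 2 = 2 * (n div 2)" by simp
        then show False using that unbalanced by simp
      qed
      then show ?thesis using that by auto
    qed
    then have "Suc ` ?A \<subseteq> ?B" by blast
    then have "card ?A \<le> card ?B" unfolding card_A by (rule card_mono[rotated]) simp
    moreover have "(n - 1) div 2 = n div 2" using True by presburger
    ultimately show ?thesis by simp
  next
    case False
    have "Suc ` ?A \<subseteq> insert (n div 2) ?B" by auto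
    then have "card ?A \<le> card (insert (n div 2) ?B)" unfolding card_A by (rule card_mono[rotated]) simp
    also have "\<dots> \<le> card ?B + 1" by (simp add: card_insert_if)
    finally have "card ?A \<le> card ?B + 1" .
    moreover have "?A = {}" if "n = 0" using that by simp
    moreover have "(n - 1) div 2 + 1 = n div 2" if "n \<noteq> 0" using False that by presburger
    ultimately show ?thesis by (cases "n = 0") auto
  qed
qed

theorem corollary4p4:
  fixes n :: nat and \<sigma> :: "nat \<Rightarrow> nat"
  assumes "labeled_path n \<sigma>"
    and "card (ribbon_columns n \<sigma>) \<ge> 2"
    and "\<forall>x\<in>ribbon_columns n \<sigma>. card (column_boxes n \<sigma> x) \<ge> 2"
  shows "\<not> cqf_symmetric n \<sigma>"
proof
  assume symmetric: "cqf_symmetric n \<sigma>"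
  have bij: "bij_betw \<sigma> {1..n} {1..n}" using assms(1) unfolding labeled_path_def .
  note inj = bij_betw_imp_inj_on[OF bij]
  obtain p where p: "even p" "2 \<le> p" "p < n" "zigzag \<sigma> (p - 1) = zigzag \<sigma> p"
    using even_turn_exists[OF bij assms(2,3)] by blast
  let ?k = "zigzag_count n \<sigma>"
  have "cqf_coeff n \<sigma> ?k (\<lambda>j. content_213 n (rotate_colors j)) = cqf_coeff n \<sigma> ?k (content_213 n)"
    using symmetric bij_rotate_colors unfolding cqf_symmetric_def by blast
  then have same: "card (position_colorings n \<sigma> ?k (content_132 n)) = card (position_colorings n \<sigma> ?k (content_213 n))"
    unfolding content_213_rotate_colors cqf_coeff_eq_card_position_colorings[OF bij] .
  let ?A = "{q\<in>{2..<n}. even q \<and> zigzag \<sigma> (q - 1) \<noteq> zigzag \<sigma> q}"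
  have "?A \<subseteq> {q\<in>{2..n - 1}. even q}" by auto
  moreover have "p \<in> {q\<in>{2..n - 1}. even q} - ?A" using p by auto
  ultimately have "card ?A < card {q\<in>{2..n - 1}. even q}"
    by (intro psubset_card_mono) auto
  then have "card ?A < (n - 1) div 2" by (simp only: card_even_atLeastAtMost)
  then show False
    using same card_position_colorings_132_ge[OF inj] card_position_colorings_213_le[OF inj]
      card_tail_balanced_shift[of n \<sigma>] card_even_atLeastAtMost[of n] by linarith
qed

end
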